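(* Let $V=\{1,\dots,n\}$, let $(\bar\Omega,\mathcal F,\mathbb P)$ be a probability space, and let $\sigma:\{0,1\}^n\times\bar\Omega\to\mathbb R$ be such that for every $\omega\in\bar\Omega$ the set function $X\mapsto\sigma(X,\omega)$ (identifying $X\subseteq V$ with its characteristic vector $x\in\{0,1\}^n$) is nondecreasing and submodular, and for each $x$ the random variable $\sigma(x)=\sigma(x,\cdot)$ is integrable. Let $\mathcal X\subseteq\{0,1\}^n$ and $\alpha\in(0,1]$. Let $\bar x\in\mathcal X$ with support $\bar X=\{j\in V:\bar x_j=1\}$, let $r=|V\setminus\bar X|$ and let $j_1,\dots,j_r$ be any ordering of $V\setminus\bar X$. For $i=1,\dots,r$ define $\bar x^{j_i}=\mathbf 1-\sum_{l=i+1}^{r}\mathbf e_{j_l}$ and $\bar\delta_{j_i}(\bar x)=\mathrm{CVaR}_\alpha(\sigma(\bar x^{j_i}))-\mathrm{CVaR}_\alpha(\sigma(\bar x))$. Then for every $x\in\mathcal X$ and every $\psi\in\mathbb R$ with $\psi\le\mathrm{CVaR}_\alpha(\sigma(x))$, $$\psi\le \mathrm{CVaR}_\alpha(\sigma(\bar x))+\sum_{i=1}^r\bar\delta_{j_i}(\bar x)\,x_{j_i}.$$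
   Context: For a random variable $Y$ with finite expectation and $\alpha\in(0,1]$, $\mathrm{CVaR}_\alpha(Y)=\max_{\eta\in\mathbb R}\{\eta-\frac1\alpha\mathbb E([\eta-Y]_+)\}$, where $[z]_+=\max(z,0)$. $\mathbf e_j$ is the $j$-th unit vector in $\mathbb R^n$ and $\mathbf 1$ is the all-ones vector in $\mathbb R^n$. *)

theory Defs
  imports "HOL-Probability.Probability"
begin

text \<open>Conditional value-at-risk: CVaR_alpha(Y) = max over eta of
  eta - (1/alpha) E([eta - Y]_+). The maximum is rendered as a supremum.\<close>
definition CVaR :: "'a measure \<Rightarrow> real \<Rightarrow> ('a \<Rightarrow> real) \<Rightarrow> real" where
  "CVaR M \<alpha> Y = (SUP \<eta>::real. \<eta> - (1 / \<alpha>) * (\<integral>\<omega>. max (\<eta> - Y \<omega>) 0 \<partial>M))"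

end

theory Submission
  imports Defs
begin

text \<open>Only monotonicity of \<open>\<sigma>\<close> matters. CVaR is monotone in the random variable, so \<open>f A = CVaR(\<sigma>(A))\<close> is a monotone set function. If \<open>js ! k\<close> is the last
  element of \<open>js\<close> that lies in \<open>X\<close>, then \<open>X\<close> is contained in \<open>V - {js ! (k+1), ...}\<close>, so
  \<open>f X\<close> is at most \<open>f Xbar\<close> plus the \<open>k\<close>-th increment. The other increments that the indicator
  of \<open>X\<close> selects are nonnegative, again by monotonicity.\<close>

lemma integrable_max_diff_0:
  fixes Y :: "'a \<Rightarrow> real"
  assumes "prob_space M" "integrable M Y"
  shows "integrable M (\<lambda>\<omega>. max (\<eta> - Y \<omega>) 0)"
proof -
  interpret prob_space M by fact
  have "integrable M (\<lambda>\<omega>. \<eta> - Y \<omega>)" using assms(2) by auto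
  from integrable_max[OF this, of "\<lambda>_. 0"] show ?thesis by simp
qed

lemma CVaR_objective_le_expectation:
  fixes Y :: "'a \<Rightarrow> real"
  assumes "prob_space M" "integrable M Y" "0 < \<alpha>" "\<alpha> \<le> 1"
  shows "\<eta> - (1 / \<alpha>) * (\<integral>\<omega>. max (\<eta> - Y \<omega>) 0 \<partial>M) \<le> (\<integral>\<omega>. Y \<omega> \<partial>M)"
proof -
  interpret prob_space M by fact
  let ?I = "\<integral>\<omega>. max (\<eta> - Y \<omega>) 0 \<partial>M"
  have "\<eta> - (\<integral>\<omega>. Y \<omega> \<partial>M) = (\<integral>\<omega>. \<eta> - Y \<omega> \<partial>M)"
    using assms(2) by (simp add: prob_space)
  also have "\<dots> \<le> ?I"
    using assms(2) by (intro integral_mono integrable_max_diff_0 assms(1)) auto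
  also have "\<dots> \<le> (1 / \<alpha>) * ?I"
  proof -
    have "0 \<le> ?I" by (intro integral_nonneg_AE) auto
    moreover have "1 \<le> 1 / \<alpha>" using assms(3,4) by simp
    ultimately show ?thesis using mult_right_mono by fastforce
  qed
  finally show ?thesis by simp
qed

lemma CVaR_mono:
  fixes Y Z :: "'a \<Rightarrow> real"
  assumes "prob_space M" "integrable M Y" "integrable M Z" "0 < \<alpha>" "\<alpha> \<le> 1"
    and le: "\<And>\<omega>. \<omega> \<in> space M \<Longrightarrow> Y \<omega> \<le> Z \<omega>"
  shows "CVaR M \<alpha> Y \<le> CVaR M \<alpha> Z"
  unfolding CVaR_def
proof (rule cSUP_mono)
  show "bdd_above (range (\<lambda>\<eta>. \<eta> - (1 / \<alpha>) * (\<integral>\<omega>. max (\<eta> - Z \<omega>) 0 \<partial>M)))"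
    using CVaR_objective_le_expectation[OF assms(1,3-5)] by (intro bdd_aboveI2) auto
  fix \<eta> :: real
  have "(\<integral>\<omega>. max (\<eta> - Z \<omega>) 0 \<partial>M) \<le> (\<integral>\<omega>. max (\<eta> - Y \<omega>) 0 \<partial>M)"
    using le by (intro integral_mono integrable_max_diff_0 assms(1-3)) (auto dest: le)
  then have "\<eta> - (1 / \<alpha>) * (\<integral>\<omega>. max (\<eta> - Y \<omega>) 0 \<partial>M)
      \<le> \<eta> - (1 / \<alpha>) * (\<integral>\<omega>. max (\<eta> - Z \<omega>) 0 \<partial>M)"
    using assms(4) by (simp add: divide_right_mono)
  then show "\<exists>\<eta>'\<in>UNIV. \<eta> - (1 / \<alpha>) * (\<integral>\<omega>. max (\<eta> - Y \<omega>) 0 \<partial>M)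
      \<le> \<eta>' - (1 / \<alpha>) * (\<integral>\<omega>. max (\<eta>' - Z \<omega>) 0 \<partial>M)"
    by blast
qed auto

lemma obtain_last_nth_in:
  assumes "X \<inter> set xs \<noteq> {}"
  obtains k where "k < length xs" "xs ! k \<in> X" "X \<inter> set (drop (Suc k) xs) = {}"
  using assms
proof (induction xs arbitrary: thesis)
  case Nil
  then show ?case by simp
next
  case (Cons a xs)
  show ?case
  proof (cases "X \<inter> set xs = {}")
    case True
    with Cons.prems(2) have "a \<in> X" by auto
    with True show ?thesis by (intro Cons.prems(1)[of 0]) auto
  next
    case False
    then obtain k where "k < length xs" "xs ! k \<in> X" "X \<inter> set (drop (Suc k) xs) = {}"
      using Cons.IH by blast
    then show ?thesis by (intro Cons.prems(1)[of "Suc k"]) auto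
  qed
qed

lemma mono_set_fun_le_sum_increments:
  fixes f :: "'b set \<Rightarrow> real"
  assumes mono: "\<And>A B. A \<subseteq> B \<Longrightarrow> B \<subseteq> U \<Longrightarrow> f A \<le> f B"
    and "Xbar \<subseteq> U" "X \<subseteq> U" "set js = U - Xbar"
  shows "f X \<le> f Xbar + (\<Sum>k<length js. (f (U - set (drop (Suc k) js)) - f Xbar)
                                         * (if js ! k \<in> X then 1 else 0))"
proof -
  define incr where "incr k = (f (U - set (drop (Suc k) js)) - f Xbar)
                                * (if js ! k \<in> X then 1 else 0)" for k
  have incr_nonneg: "0 \<le> incr k" for k
  proof -
    have "Xbar \<subseteq> U - set (drop (Suc k) js)"
      using assms(2,4) set_drop_subset[of "Suc k" js] by blast
    then show ?thesis unfolding incr_def by (auto dest: mono)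
  qed
  have "f X \<le> f Xbar + (\<Sum>k<length js. incr k)"
  proof (cases "X \<inter> set js = {}")
    case True
    then have "f X \<le> f Xbar" using assms by (intro mono) auto
    moreover have "0 \<le> (\<Sum>k<length js. incr k)" by (intro sum_nonneg incr_nonneg)
    ultimately show ?thesis by simp
  next
    case False
    then obtain k where k: "k < length js" "js ! k \<in> X" "X \<inter> set (drop (Suc k) js) = {}"
      by (rule obtain_last_nth_in)
    then have "f X \<le> f (U - set (drop (Suc k) js))" using assms(3) by (intro mono) auto
    also have "\<dots> = f Xbar + incr k" using k(2) by (simp add: incr_def)
    also have "incr k \<le> (\<Sum>k<length js. incr k)"
      using k(1) incr_nonneg by (intro member_le_sum) auto
    finally show ?thesis by simp
  qed
  then show ?thesis by (simp add: incr_def)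
qed

theorem proposition2:
  fixes M :: "'a measure" and n :: nat and \<sigma> :: "nat set \<Rightarrow> 'a \<Rightarrow> real"
    and \<X> :: "nat set set" and \<alpha> \<psi> :: real and Xbar X :: "nat set" and js :: "nat list"
  assumes "prob_space M"
    and mono: "\<And>\<omega> A B. \<omega> \<in> space M \<Longrightarrow> A \<subseteq> B \<Longrightarrow> B \<subseteq> {1..n} \<Longrightarrow> \<sigma> A \<omega> \<le> \<sigma> B \<omega>"
    and submod: "\<And>\<omega> A B. \<omega> \<in> space M \<Longrightarrow> A \<subseteq> {1..n} \<Longrightarrow> B \<subseteq> {1..n} \<Longrightarrow>
                   \<sigma> (A \<union> B) \<omega> + \<sigma> (A \<inter> B) \<omega> \<le> \<sigma> A \<omega> + \<sigma> B \<omega>"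
    and integ: "\<And>A. A \<subseteq> {1..n} \<Longrightarrow> integrable M (\<sigma> A)"
    and "\<X> \<subseteq> Pow {1..n}"
    and "0 < \<alpha>" and "\<alpha> \<le> 1"
    and "Xbar \<in> \<X>"
    and "distinct js" and "set js = {1..n} - Xbar"
    and "X \<in> \<X>"
    and "\<psi> \<le> CVaR M \<alpha> (\<sigma> X)"
  shows "\<psi> \<le> CVaR M \<alpha> (\<sigma> Xbar)
           + (\<Sum>k<length js. (CVaR M \<alpha> (\<sigma> ({1..n} - set (drop (Suc k) js))) - CVaR M \<alpha> (\<sigma> Xbar))
                              * (if js ! k \<in> X then 1 else 0))"
proof -
  have CVaR_\<sigma>_mono: "CVaR M \<alpha> (\<sigma> A) \<le> CVaR M \<alpha> (\<sigma> B)" if "A \<subseteq> B" "B \<subseteq> {1..n}" for A B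
    using that by (intro CVaR_mono integ mono assms(1,6,7)) auto
  have "Xbar \<subseteq> {1..n}" "X \<subseteq> {1..n}" using assms(5,8,11) by auto
  from mono_set_fun_le_sum_increments[where f = "\<lambda>A. CVaR M \<alpha> (\<sigma> A)", OF CVaR_\<sigma>_mono this assms(10)]
  show ?thesis using assms(12) by linarith
qed

end
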